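(* Let $G=(V,E)$ be a transitive and finite directed graph with in-degree at least $2$ at every vertex, let $v\in V$ have in-degree at least $3$, and let $\widehat{G}_v$ be the $v$-lag of $G$. Then the map $\theta$ is a bijection between the set $E^\bullet$ of finite paths of $G$ and the set of finite paths in $\widehat{G}_v$ whose range and source both lie in $V$.
   Context: A directed graph $G=(V,E,r,s)$; in-degree of $v$ is $|r^{-1}(v)|$. $E^\bullet$ denotes the finite paths $\lambda=e_1\cdots e_n$ ($s(e_i)=r(e_{i+1})$), vertices counting as paths of length $0$; "an edge from $u$ to $w$" has source $u$, range $w$; $G$ is transitive if there is a path between any two vertices. The $v$-lag $\widehat{G}_v$ at a vertex $v$ of in-degree $d_v\ge3$: enumerate edges with range $v$ as $e_0,\dots,e_{d_v-1}$ with sources $u_0,\dots,u_{d_v-1}$; keep all vertices and all edges not ranging in $v$; add vertices $v_1,\dots,v_{d_v-2}$, an edge $f_1$ from $v_1$ to $v$ and edges $f_i$ from $v_i$ to $v_{i-1}$ ($2\le i\le d_v-2$); replace $e_0$ by $\hat e_0$ from $u_0$ to $v$, $e_j$ by $\hat e_j$ from $u_j$ to $v_j$ ($1\le j\le d_v-2$), and $e_{d_v-1}$ by $\hat e_{d_v-1}$ from $u_{d_v-1}$ to $v_{d_v-2}$. The map $\theta$: $\theta(u)=u$ for $u\in V$ (via $V\subseteq\widehat{V}_v$), $\theta(e)=e$ for $e\in E$ with $r(e)\neq v$, $\theta(e_j)=f_1f_2\cdots f_j\hat e_j$ for $0\le j\le d_v-1$, where for $j=d_v-1$ this means $f_1\cdots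 f_{d_v-2}\hat e_{d_v-1}$ and for $j=0$ just $\hat e_0$; extended to paths by concatenation. *)

theory Defs
  imports Main
begin

definition is_graph :: "'v set \<Rightarrow> 'e set \<Rightarrow> ('e \<Rightarrow> 'v) \<Rightarrow> ('e \<Rightarrow> 'v) \<Rightarrow> bool" where
  "is_graph V E r s \<longleftrightarrow> (\<forall>e\<in>E. r e \<in> V \<and> s e \<in> V)"

definition in_edges :: "'e set \<Rightarrow> ('e \<Rightarrow> 'v) \<Rightarrow> 'v \<Rightarrow> 'e set" where
  "in_edges E r u = {e \<in> E. r e = u}"

definition in_degree :: "'e set \<Rightarrow> ('e \<Rightarrow> 'v) \<Rightarrow> 'v \<Rightarrow> nat" where
  "in_degree E r u = card (in_edges E r u)"

text \<open>Finite paths: a pair (u, es).  (u, []) is the vertex u as a path of length 0;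
  (u, [e1,...,en]) with n \<ge> 1 is the path e1...en, where u = r e1 is its range and
  s(e_i) = r(e_{i+1}).\<close>
definition paths :: "'v set \<Rightarrow> 'e set \<Rightarrow> ('e \<Rightarrow> 'v) \<Rightarrow> ('e \<Rightarrow> 'v) \<Rightarrow> ('v \<times> 'e list) set" where
  "paths V E r s = {(u, es). u \<in> V \<and> set es \<subseteq> E \<and> (es \<noteq> [] \<longrightarrow> r (hd es) = u)
      \<and> (\<forall>i. Suc i < length es \<longrightarrow> s (es ! i) = r (es ! Suc i))}"

definition prange :: "'v \<times> 'e list \<Rightarrow> 'v" where
  "prange p = fst p"

definition psource :: "('e \<Rightarrow> 'v) \<Rightarrow> 'v \<times> 'e list \<Rightarrow> 'v" where
  "psource s p = (if snd p = [] then fst p else s (last (snd p)))"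

definition transitive_graph :: "'v set \<Rightarrow> 'e set \<Rightarrow> ('e \<Rightarrow> 'v) \<Rightarrow> ('e \<Rightarrow> 'v) \<Rightarrow> bool" where
  "transitive_graph V E r s \<longleftrightarrow>
     (\<forall>u\<in>V. \<forall>w\<in>V. \<exists>p\<in>paths V E r s. prange p = u \<and> psource s p = w)"

text \<open>The v-lag, relative to an enumeration en : {0..<d} \<rightarrow> r^{-1}(v) of the edges ranging in v.
  Vertices of the lag: Inl u for u \<in> V, and Inr i for the new vertex v_i (1 \<le> i \<le> d-2).
  Edges of the lag: Inl e for e \<in> E (for r e = v this is \<hat>e_j), and Inr i for f_i.\<close>

definition lag_index :: "'e set \<Rightarrow> ('e \<Rightarrow> 'v) \<Rightarrow> 'v \<Rightarrow> (nat \<Rightarrow> 'e) \<Rightarrow> 'e \<Rightarrow> nat" where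
  "lag_index E r v en e = the_inv_into {..<in_degree E r v} en e"

definition lag_V :: "'v set \<Rightarrow> 'e set \<Rightarrow> ('e \<Rightarrow> 'v) \<Rightarrow> 'v \<Rightarrow> ('v + nat) set" where
  "lag_V V E r v = Inl ` V \<union> Inr ` {1..in_degree E r v - 2}"

definition lag_E :: "'e set \<Rightarrow> ('e \<Rightarrow> 'v) \<Rightarrow> 'v \<Rightarrow> ('e + nat) set" where
  "lag_E E r v = Inl ` E \<union> Inr ` {1..in_degree E r v - 2}"

fun lag_r :: "'e set \<Rightarrow> ('e \<Rightarrow> 'v) \<Rightarrow> 'v \<Rightarrow> (nat \<Rightarrow> 'e) \<Rightarrow> 'e + nat \<Rightarrow> 'v + nat" where
  "lag_r E r v en (Inl e) =
     (if r e = v then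
        (let j = lag_index E r v en e; d = in_degree E r v in
          if j = 0 then Inl v
          else if j \<le> d - 2 then Inr j
          else Inr (d - 2))
      else Inl (r e))"
| "lag_r E r v en (Inr i) = (if i = 1 then Inl v else Inr (i - 1))"

fun lag_s :: "('e \<Rightarrow> 'v) \<Rightarrow> 'e + nat \<Rightarrow> 'v + nat" where
  "lag_s s (Inl e) = Inl (s e)"
| "lag_s s (Inr i) = Inr i"

definition theta_edge :: "'e set \<Rightarrow> ('e \<Rightarrow> 'v) \<Rightarrow> 'v \<Rightarrow> (nat \<Rightarrow> 'e) \<Rightarrow> 'e \<Rightarrow> ('e + nat) list" where
  "theta_edge E r v en e =
     (if r e = v then
        map Inr [1..<Suc (min (lag_index E r v en e) (in_degree E r v - 2))] @ [Inl e]
      else [Inl e])"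

definition theta :: "'e set \<Rightarrow> ('e \<Rightarrow> 'v) \<Rightarrow> 'v \<Rightarrow> (nat \<Rightarrow> 'e) \<Rightarrow> 'v \<times> 'e list \<Rightarrow> ('v + nat) \<times> ('e + nat) list" where
  "theta E r v en p = (Inl (fst p), concat (map (theta_edge E r v en) (snd p)))"

end

theory Submission
  imports Defs
begin

text \<open>Read a path from its range towards its source.  Then \<theta> replaces an edge \<open>e\<^sub>j\<close> into \<open>v\<close>
  by the block \<open>f\<^sub>1 \<dots> f\<^sub>k \<hat>e\<^sub>j\<close>, and deleting the new edges \<open>f\<^sub>i\<close> undoes this, so \<theta> is
  injective.  Conversely, in the lag the only edges with range \<open>v\<^sub>i\<close> are \<open>f\<^sub>i\<^sub>+\<^sub>1\<close> and
  edges \<open>\<hat>e\<^sub>j\<close>, while \<open>v\<^sub>i\<close> is the source of \<open>f\<^sub>i\<close> only.  Hence a lag path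
  that leaves the old vertices at \<open>v\<close> through \<open>f\<^sub>1\<close> has to descend \<open>f\<^sub>1 \<dots> f\<^sub>k\<close> and, since
  it ends at an old vertex, leave through some \<open>\<hat>e\<^sub>j\<close> attached to \<open>v\<^sub>k\<close>, i.e. it runs
  through the block \<open>\<theta>(e\<^sub>j)\<close>.  So every lag path between old vertices is a concatenation
  of such blocks, which gives surjectivity.\<close>

primrec walk :: "'e set \<Rightarrow> ('e \<Rightarrow> 'v) \<Rightarrow> ('e \<Rightarrow> 'v) \<Rightarrow> 'v \<Rightarrow> 'e list \<Rightarrow> bool" where
  "walk E r s u [] = True"
| "walk E r s u (e # es) \<longleftrightarrow> e \<in> E \<and> r e = u \<and> walk E r s (s e) es"

lemma psource_Nil [simp]: "psource s (u, []) = u"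
  by (simp add: psource_def)

lemma psource_Cons [simp]: "psource s (u, e # es) = psource s (s e, es)"
  by (simp add: psource_def)

lemma psource_append: "psource s (u, xs @ ys) = psource s (psource s (u, xs), ys)"
  by (induction xs arbitrary: u) auto

lemma walk_append:
  "walk E r s u (xs @ ys) \<longleftrightarrow> walk E r s u xs \<and> walk E r s (psource s (u, xs)) ys"
  by (induction xs arbitrary: u) auto

lemma chain_Cons_iff:
  "(\<forall>i. Suc i < length (e # es) \<longrightarrow> s ((e # es) ! i) = r ((e # es) ! Suc i)) \<longleftrightarrow>
     (es \<noteq> [] \<longrightarrow> s e = r (hd es)) \<and> (\<forall>i. Suc i < length es \<longrightarrow> s (es ! i) = r (es ! Suc i))"
  by (cases es) (auto simp: nth_Cons split: nat.splits)

lemma walk_iff: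
  "walk E r s u es \<longleftrightarrow> set es \<subseteq> E \<and> (es \<noteq> [] \<longrightarrow> r (hd es) = u) \<and>
     (\<forall>i. Suc i < length es \<longrightarrow> s (es ! i) = r (es ! Suc i))"
proof (induction es arbitrary: u)
  case (Cons e es)
  show ?case
    unfolding chain_Cons_iff by (auto simp: Cons.IH)
qed simp

lemma paths_iff_walk: "(u, es) \<in> paths V E r s \<longleftrightarrow> u \<in> V \<and> walk E r s u es"
  by (simp add: paths_def walk_iff)

lemma psource_in_vertices:
  assumes "is_graph V E r s" and "(u, es) \<in> paths V E r s"
  shows "psource s (u, es) \<in> V"
  using assms by (cases es rule: rev_cases) (auto simp: paths_def psource_def is_graph_def)

abbreviation lag_walk ::
    "'e set \<Rightarrow> ('e \<Rightarrow> 'v) \<Rightarrow> ('e \<Rightarrow> 'v) \<Rightarrow> 'v \<Rightarrow> (nat \<Rightarrow> 'e) \<Rightarrow> 'v + nat \<Rightarrow> ('e + nat) list \<Rightarrow> bool" where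
  "lag_walk E r s v en \<equiv> walk (lag_E E r v) (lag_r E r v en) (lag_s s)"

abbreviation theta_edges :: "'e set \<Rightarrow> ('e \<Rightarrow> 'v) \<Rightarrow> 'v \<Rightarrow> (nat \<Rightarrow> 'e) \<Rightarrow> 'e list \<Rightarrow> ('e + nat) list" where
  "theta_edges E r v en es \<equiv> concat (map (theta_edge E r v en) es)"

text \<open>The number \<open>k\<close> of new edges \<open>f\<^sub>1 \<dots> f\<^sub>k\<close> that \<theta> puts in front of \<open>e\<close>; in the lag,
  \<open>e\<close> has range \<open>v\<^sub>k\<close> if \<open>k > 0\<close>.\<close>
definition lag_depth :: "'e set \<Rightarrow> ('e \<Rightarrow> 'v) \<Rightarrow> 'v \<Rightarrow> (nat \<Rightarrow> 'e) \<Rightarrow> 'e \<Rightarrow> nat" where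
  "lag_depth E r v en e =
     (if r e = v then min (lag_index E r v en e) (in_degree E r v - 2) else 0)"

definition base_edges :: "('e + nat) list \<Rightarrow> 'e list" where
  "base_edges fs = map projl (filter isl fs)"

lemma theta_edge_eq: "theta_edge E r v en e = map Inr [1..<Suc (lag_depth E r v en e)] @ [Inl e]"
  by (simp add: theta_edge_def lag_depth_def)

lemma theta_edge_nonempty: "theta_edge E r v en e \<noteq> []"
  by (simp add: theta_edge_eq)

lemma base_edges_theta_edges: "base_edges (theta_edges E r v en es) = es"
  by (induction es) (simp_all add: base_edges_def theta_edge_eq)

lemma lag_depth_le_in_degree: "lag_depth E r v en e \<le> in_degree E r v - 2"
  by (simp add: lag_depth_def)

lemma lag_depth_pos_range: "0 < lag_depth E r v en e \<Longrightarrow> r e = v"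
  by (simp add: lag_depth_def split: if_splits)

lemma lag_r_Inl:
  assumes "3 \<le> in_degree E r v"
  shows "lag_r E r v en (Inl e) =
    (if lag_depth E r v en e = 0 then Inl (r e) else Inr (lag_depth E r v en e))"
  using assms by (auto simp: lag_depth_def Let_def)

lemma lag_walk_new_edges:
  assumes "m \<le> lag_depth E r v en e"
  shows "lag_walk E r s v en (Inl (r e)) (map Inr [1..<Suc m]) \<and>
    psource (lag_s s) (Inl (r e), map Inr [1..<Suc m]) = (if m = 0 then Inl (r e) else Inr m)"
  using assms
proof (induction m)
  case (Suc m)
  then have "r e = v" and "Suc m \<le> in_degree E r v - 2"
    using lag_depth_pos_range[of E r v en e] lag_depth_le_in_degree[of E r v en e] by auto
  with Suc show ?case
    by (simp add: walk_append psource_append lag_E_def)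
qed simp

context
  fixes E :: "'e set" and r s :: "'e \<Rightarrow> 'v" and v :: 'v and en :: "nat \<Rightarrow> 'e"
  assumes three_le_in_degree: "3 \<le> in_degree E r v"
begin

declare lag_r.simps(1) [simp del] lag_r_Inl[OF three_le_in_degree, simp]

lemma lag_walk_theta_edge:
  assumes "e \<in> E"
  shows "lag_walk E r s v en (Inl (r e)) (theta_edge E r v en e) \<and>
    psource (lag_s s) (Inl (r e), theta_edge E r v en e) = Inl (s e)"
proof -
  let ?k = "lag_depth E r v en e"
  have "lag_walk E r s v en (Inl (r e)) (map Inr [1..<Suc ?k]) \<and>
    psource (lag_s s) (Inl (r e), map Inr [1..<Suc ?k]) = (if ?k = 0 then Inl (r e) else Inr ?k)"
    by (rule lag_walk_new_edges) simp
  then show ?thesis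
    using assms unfolding theta_edge_eq walk_append psource_append
    by (simp add: lag_E_def)
qed

lemma lag_walk_theta_edges:
  assumes "walk E r s u es"
  shows "lag_walk E r s v en (Inl u) (theta_edges E r v en es) \<and>
    psource (lag_s s) (Inl u, theta_edges E r v en es) = Inl (psource s (u, es))"
  using assms
proof (induction es arbitrary: u)
  case (Cons e es)
  then show ?case
    using lag_walk_theta_edge[of e] by (simp add: walk_append psource_append)
qed simp

text \<open>A lag walk from \<open>v\<^sub>i\<close> that ends at an old vertex is the tail of a block \<open>\<theta>(e)\<close>
  whose first \<open>i\<close> edges \<open>f\<^sub>1 \<dots> f\<^sub>i\<close> have already been traversed.\<close>
lemma lag_walk_from_new_vertex:
  assumes "lag_walk E r s v en (Inr i) fs" and "isl (psource (lag_s s) (Inr i, fs))"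
  shows "\<exists>e rest. e \<in> E \<and> i \<le> lag_depth E r v en e \<and>
    map Inr [1..<Suc i] @ fs = theta_edge E r v en e @ rest"
  using assms
proof (induction fs arbitrary: i)
  case (Cons f fs)
  show ?case
  proof (cases f)
    case (Inl e)
    with Cons.prems have "e \<in> E" and "lag_depth E r v en e = i"
      by (auto simp: lag_E_def split: if_splits)
    with Inl show ?thesis
      by (intro exI[of _ e] exI[of _ fs]) (simp add: theta_edge_eq)
  next
    case (Inr k)
    with Cons.prems have "k = Suc i"
      by (auto simp: lag_E_def split: if_splits)
    with Inr Cons.prems obtain e rest where "e \<in> E" "Suc i \<le> lag_depth E r v en e"
        and "map Inr [1..<Suc (Suc i)] @ fs = theta_edge E r v en e @ rest"
      using Cons.IH[of k] by auto
    with Inr \<open>k = Suc i\<close> show ?thesis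
      by (intro exI[of _ e] exI[of _ rest]) auto
  qed
qed simp

lemma lag_walk_first_block:
  assumes "lag_walk E r s v en (Inl u) fs" and "fs \<noteq> []"
    and "isl (psource (lag_s s) (Inl u, fs))"
  shows "\<exists>e rest. e \<in> E \<and> r e = u \<and> fs = theta_edge E r v en e @ rest"
proof -
  obtain f fs' where fs: "fs = f # fs'"
    using \<open>fs \<noteq> []\<close> by (cases fs) auto
  show ?thesis
  proof (cases f)
    case (Inl e)
    with assms fs have "e \<in> E" "r e = u" "lag_depth E r v en e = 0"
      by (auto simp: lag_E_def split: if_splits)
    with Inl fs show ?thesis
      by (intro exI[of _ e] exI[of _ fs']) (simp add: theta_edge_eq)
  next
    case (Inr k)
    with assms fs have "k = 1" "u = v"
      by (auto simp: lag_E_def split: if_splits)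
    with Inr assms fs obtain e rest where "e \<in> E" "1 \<le> lag_depth E r v en e"
        and "Inr 1 # fs' = theta_edge E r v en e @ rest"
      using lag_walk_from_new_vertex[of 1 fs'] by auto
    moreover from \<open>1 \<le> lag_depth E r v en e\<close> \<open>u = v\<close> have "r e = u"
      using lag_depth_pos_range[of E r v en e] by simp
    ultimately show ?thesis
      using Inr \<open>k = 1\<close> fs by blast
  qed
qed

lemma lag_walk_decode:
  assumes "lag_walk E r s v en (Inl u) fs" and "isl (psource (lag_s s) (Inl u, fs))"
  shows "walk E r s u (base_edges fs) \<and> theta_edges E r v en (base_edges fs) = fs"
  using assms
proof (induction fs arbitrary: u rule: length_induct)
  case (1 fs)
  show ?case
  proof (cases "fs = []")
    case False
    with "1.prems" obtain e rest where e: "e \<in> E" "r e = u"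
        and fs: "fs = theta_edge E r v en e @ rest"
      using lag_walk_first_block by blast
    have "lag_walk E r s v en (Inl (s e)) rest" "isl (psource (lag_s s) (Inl (s e), rest))"
      using "1.prems" lag_walk_theta_edge[OF e(1)] unfolding fs e(2)[symmetric]
      by (simp_all add: walk_append psource_append)
    moreover have "length rest < length fs"
      using theta_edge_nonempty[of E r v en e] by (simp add: fs)
    ultimately have "walk E r s (s e) (base_edges rest) \<and> theta_edges E r v en (base_edges rest) = rest"
      using "1.IH" by blast
    moreover have "base_edges fs = e # base_edges rest"
      by (simp add: fs base_edges_def theta_edge_eq)
    ultimately show ?thesis
      using e fs by simp
  qed (simp add: base_edges_def)
qed

end

theorem lemma3p7:
  fixes V :: "'v set" and E :: "'e set" and r s :: "'e \<Rightarrow> 'v" and v :: 'v and en :: "nat \<Rightarrow> 'e"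
  assumes "is_graph V E r s"
    and "finite V" and "finite E"
    and "transitive_graph V E r s"
    and "\<forall>u\<in>V. in_degree E r u \<ge> 2"
    and "v \<in> V" and "in_degree E r v \<ge> 3"
    and "bij_betw en {..<in_degree E r v} (in_edges E r v)"
  shows "bij_betw (theta E r v en) (paths V E r s)
           {p \<in> paths (lag_V V E r v) (lag_E E r v) (lag_r E r v en) (lag_s s).
              prange p \<in> Inl ` V \<and> psource (lag_s s) p \<in> Inl ` V}"
proof -
  let ?lag_paths = "{p \<in> paths (lag_V V E r v) (lag_E E r v) (lag_r E r v en) (lag_s s).
    prange p \<in> Inl ` V \<and> psource (lag_s s) p \<in> Inl ` V}"
  define unlag :: "('v + nat) \<times> ('e + nat) list \<Rightarrow> 'v \<times> 'e list"
    where "unlag = (\<lambda>(x, fs). (projl x, base_edges fs))"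
  have encode: "theta E r v en p \<in> ?lag_paths" if "p \<in> paths V E r s" for p
    using that lag_walk_theta_edges[OF assms(7), where u = "fst p" and es = "snd p" and en = en]
      psource_in_vertices[OF assms(1), where u = "fst p" and es = "snd p"]
    by (cases p) (auto simp: theta_def paths_iff_walk prange_def lag_V_def)
  have decode: "unlag p \<in> paths V E r s \<and> theta E r v en (unlag p) = p" if "p \<in> ?lag_paths" for p
  proof -
    from that obtain u fs where "p = (Inl u, fs)" "u \<in> V"
      and "lag_walk E r s v en (Inl u) fs" "isl (psource (lag_s s) (Inl u, fs))"
      by (cases p) (auto simp: paths_iff_walk prange_def)
    with lag_walk_decode[OF assms(7)] show ?thesis
      by (auto simp: unlag_def theta_def paths_iff_walk)
  qed
  have "unlag (theta E r v en p) = p" for p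
    by (cases p) (simp add: unlag_def theta_def base_edges_theta_edges)
  with encode decode show ?thesis
    by (intro bij_betw_byWitness[where f' = unlag]) auto
qed

end
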